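(* Let $\alpha>0$, $n\ge1$ an integer, $d\nu(r)=r^{n-1}e^{-1/r^{\alpha}}dr$ on $(0,\infty)$, and let $c,c'>0$, $v_0\in(0,1)$ be constants such that the function $$J(v)=\begin{cases}c\,v\big(\log\frac1v\big)^{1+\frac1\alpha}, & 0\le v\le v_0,\\ c'\,v^{\frac{n-1}{n}}, & v>v_0\end{cases}$$ (with $J(0)=0$) is a lower isoperimetric function for $\nu$ and is concave, increasing and continuous on $(0,\infty)$. Then there exists a constant $C_J>0$ such that $C_J\,J(ab)\le bJ(a)+aJ(b)$ for all $a,b\ge0$.
   Context: For a Borel set $A\subset(0,\infty)$, $\nu^+(A)=\liminf_{r\to0^+}\frac{\nu(A^r)-\nu(A)}{r}$, where $A^r$ is the $r$-neighborhood of $A$; $J$ is a lower isoperimetric function for $\nu$ if $\nu^+(A)\ge J(\nu(A))$ for all Borel $A$. (Such constants $c,c',v_0$ exist.) *)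

theory Defs
  imports "HOL-Analysis.Analysis"
begin

definition nu_meas :: "real \<Rightarrow> nat \<Rightarrow> real measure" where
  "nu_meas \<alpha> n = density lborel
     (\<lambda>r. ennreal (indicator {0<..} r * r ^ (n - 1) * exp (- 1 / (r powr \<alpha>))))"

definition nbhd :: "real set \<Rightarrow> real \<Rightarrow> real set" where
  "nbhd A r = {x. \<exists>a\<in>A. dist x a < r}"

definition boundary_measure :: "real measure \<Rightarrow> real set \<Rightarrow> ennreal" where
  "boundary_measure \<nu> A =
     Liminf (at_right 0) (\<lambda>r. (emeasure \<nu> (nbhd A r) - emeasure \<nu> A) * ennreal (1 / r))"

text \<open>J is a lower isoperimetric function for nu: nu^+(A) >= J(nu(A)) for all Borel
  A in (0,infinity) (of finite measure, so that J(nu(A)) makes sense).\<close>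
definition lower_isoperimetric :: "real measure \<Rightarrow> (real \<Rightarrow> real) \<Rightarrow> bool" where
  "lower_isoperimetric \<nu> J \<longleftrightarrow>
     (\<forall>A. A \<in> sets borel \<and> A \<subseteq> {0<..} \<and> emeasure \<nu> A < \<infinity> \<longrightarrow>
          boundary_measure \<nu> A \<ge> ennreal (J (measure \<nu> A)))"

definition J_fun :: "real \<Rightarrow> nat \<Rightarrow> real \<Rightarrow> real \<Rightarrow> real \<Rightarrow> real \<Rightarrow> real" where
  "J_fun \<alpha> n c c' v0 v =
     (if v \<le> v0 then (if v = 0 then 0 else c * v * (ln (1 / v)) powr (1 + 1 / \<alpha>))
      else c' * v powr ((real n - 1) / real n))"

end

theory Submission
  imports Defs
begin

text \<open>
  For \<open>v > 0\<close> write \<open>J v = v * s v\<close>, where \<open>s v = c * ln (1/v) powr p\<close> on \<open>(0, v0]\<close> and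
  \<open>s v = c' * v powr (-q)\<close> beyond. Dividing by \<open>a * b\<close>, the claim becomes
  \<open>s (a * b) \<le> K * (s a + s b)\<close>. The slope \<open>s\<close> is decreasing on each piece, bounded above on
  \<open>[v0, \<infinity>)\<close> and bounded below by a positive constant on \<open>(0, 1]\<close>, hence decreasing up to a
  constant factor; this handles \<open>a \<ge> 1\<close>, \<open>b \<ge> 1\<close> and \<open>a * b > v0\<close>. In the remaining case
  \<open>s (a * b) = c * (ln (1/a) + ln (1/b)) powr p\<close>, and \<open>(x + y) powr p \<le> 2 powr p * (x powr p + y powr p)\<close>
  splits it into the two factors.
\<close>

lemma powr_add_le_two_powr:
  fixes x y p :: real
  assumes "x \<ge> 0" "y \<ge> 0" "p \<ge> 0"
  shows "(x + y) powr p \<le> 2 powr p * (x powr p + y powr p)"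
proof -
  have "(x + y) powr p \<le> (2 * max x y) powr p"
    using assms by (intro powr_mono2) auto
  also have "\<dots> = 2 powr p * max x y powr p"
    using assms by (simp add: powr_mult)
  also have "\<dots> \<le> 2 powr p * (x powr p + y powr p)"
    by (intro mult_left_mono) (auto simp: max_def)
  finally show ?thesis .
qed

lemma mult_ineq_of_slope_ineq:
  fixes J s :: "real \<Rightarrow> real" and K :: real
  assumes "K > 0" and "J 0 = 0"
    and slope: "\<And>v. v > 0 \<Longrightarrow> J v = v * s v"
    and slope_mult_le: "\<And>a b. a > 0 \<Longrightarrow> b > 0 \<Longrightarrow> s (a * b) \<le> K * (s a + s b)"
  shows "\<forall>a b. a \<ge> 0 \<longrightarrow> b \<ge> 0 \<longrightarrow> 1 / K * J (a * b) \<le> b * J a + a * J b"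
proof (intro allI impI)
  fix a b :: real
  assume "a \<ge> 0" "b \<ge> 0"
  show "1 / K * J (a * b) \<le> b * J a + a * J b"
  proof (cases "a = 0 \<or> b = 0")
    case True
    then show ?thesis using \<open>J 0 = 0\<close> by auto
  next
    case False
    with \<open>a \<ge> 0\<close> \<open>b \<ge> 0\<close> have "a > 0" "b > 0" by auto
    have "s (a * b) / K \<le> s a + s b"
      using slope_mult_le[OF \<open>a > 0\<close> \<open>b > 0\<close>] \<open>K > 0\<close>
      by (simp add: divide_le_eq mult.commute)
    then have "(a * b) * (s (a * b) / K) \<le> (a * b) * (s a + s b)"
      using \<open>a > 0\<close> \<open>b > 0\<close> by (intro mult_left_mono) auto
    then show ?thesis
      using slope[of "a * b"] slope[of a] slope[of b] \<open>a > 0\<close> \<open>b > 0\<close>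
      by (simp add: algebra_simps)
  qed
qed

locale log_power_slope =
  fixes c c' v0 p q :: real
  assumes c_pos: "c > 0" and c'_pos: "c' > 0"
    and v0: "0 < v0" "v0 < 1"
    and p: "p \<ge> 0" and q: "q \<ge> 0"
begin

definition slope :: "real \<Rightarrow> real" where
  "slope v = (if v \<le> v0 then c * ln (1 / v) powr p else c' * v powr (- q))"

definition slope_lower :: real where
  "slope_lower = min (slope v0) c'"

definition slope_upper :: real where
  "slope_upper = max (slope v0) (c' * v0 powr (- q))"

abbreviation ratio :: real where
  "ratio \<equiv> slope_upper / slope_lower"

lemma slope_v0: "slope v0 = c * ln (1 / v0) powr p"
  by (simp add: slope_def)

lemma slope_lower_pos: "slope_lower > 0"
  using v0 c_pos c'_pos by (simp add: slope_lower_def slope_v0 ln_div)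

lemma ratio_ge_1: "ratio \<ge> 1"
  using slope_lower_pos by (simp add: slope_lower_def slope_upper_def)

lemma slope_nonneg: "slope v \<ge> 0"
  using c_pos c'_pos by (simp add: slope_def)

lemma slope_ge_lower:
  assumes "0 < v" "v \<le> 1"
  shows "slope_lower \<le> slope v"
proof (cases "v \<le> v0")
  case True
  then have "ln (1 / v0) powr p \<le> ln (1 / v) powr p"
    using assms v0 p by (intro powr_mono2) (auto simp: ln_div)
  then show ?thesis
    using True c_pos by (simp add: slope_def slope_lower_def min_le_iff_disj)
next
  case False
  have "v powr q \<le> 1" "v powr q > 0"
    using assms q by (auto intro: powr_le1)
  then have "1 \<le> v powr (- q)"
    by (simp add: powr_minus one_le_inverse)
  then show ?thesis
    using False c'_pos by (simp add: slope_def slope_lower_def min_le_iff_disj)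
qed

lemma slope_le_upper:
  assumes "v0 \<le> v"
  shows "slope v \<le> slope_upper"
proof (cases "v = v0")
  case False
  with assms have "v powr (- q) \<le> v0 powr (- q)"
    using v0 q by (intro powr_mono2') auto
  then show ?thesis
    using assms False c'_pos by (simp add: slope_def slope_upper_def max.coboundedI2)
qed (simp add: slope_upper_def)

lemma slope_decreasing_on_pieces:
  assumes "0 < u" "u \<le> w" "w \<le> v0 \<or> v0 < u"
  shows "slope w \<le> slope u"
  using assms(3)
proof
  assume "w \<le> v0"
  then have "ln (1 / w) powr p \<le> ln (1 / u) powr p"
    using assms v0 p by (intro powr_mono2) (auto simp: ln_div)
  then show ?thesis
    using \<open>w \<le> v0\<close> assms c_pos by (simp add: slope_def)
next
  assume "v0 < u"
  then have "w powr (- q) \<le> u powr (- q)"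
    using assms q by (intro powr_mono2') auto
  then show ?thesis
    using \<open>v0 < u\<close> assms c'_pos by (simp add: slope_def)
qed

lemma slope_upper_le:
  assumes "0 < v" "v \<le> 1"
  shows "slope_upper \<le> ratio * slope v"
proof -
  have "slope_upper = ratio * slope_lower"
    using slope_lower_pos by simp
  also have "\<dots> \<le> ratio * slope v"
    using assms ratio_ge_1 by (intro mult_left_mono slope_ge_lower) auto
  finally show ?thesis .
qed

lemma slope_quasi_decreasing:
  assumes "0 < u" "u \<le> w"
  shows "slope w \<le> ratio * slope u"
proof (cases "w \<le> v0 \<or> v0 < u")
  case True
  have "slope w \<le> slope u"
    using slope_decreasing_on_pieces[OF assms True] .
  also have "\<dots> \<le> ratio * slope u"
    using mult_right_mono[OF ratio_ge_1 slope_nonneg[of u]] by simp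
  finally show ?thesis .
next
  case False
  then have "slope w \<le> slope_upper"
    by (intro slope_le_upper) auto
  also have "\<dots> \<le> ratio * slope u"
    using False assms v0 by (intro slope_upper_le) auto
  finally show ?thesis .
qed

lemma log_power_le_slope:
  assumes "0 < a" "a < 1"
  shows "c * ln (1 / a) powr p \<le> ratio * slope a"
proof (cases "a \<le> v0")
  case True
  then show ?thesis
    using mult_right_mono[OF ratio_ge_1 slope_nonneg[of a]] by (simp add: slope_def)
next
  case False
  then have "ln (1 / a) powr p \<le> ln (1 / v0) powr p"
    using assms v0 p by (intro powr_mono2) (auto simp: ln_div)
  then have "c * ln (1 / a) powr p \<le> slope v0"
    using c_pos by (simp add: slope_v0)
  also have "\<dots> \<le> slope_upper"
    by (intro slope_le_upper) simp
  also have "\<dots> \<le> ratio * slope a"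
    using assms by (intro slope_upper_le) auto
  finally show ?thesis .
qed

lemma slope_mult_le_large:
  assumes "a > 0" "b > 0" and large: "a \<ge> 1 \<or> b \<ge> 1 \<or> v0 < a * b"
  shows "slope (a * b) \<le> ratio * (slope a + slope b)"
proof -
  consider "a \<ge> 1" | "b \<ge> 1" | "a < 1" "v0 < a * b"
    using large by fastforce
  then have "slope (a * b) \<le> ratio * slope a \<or> slope (a * b) \<le> ratio * slope b"
  proof cases
    case 1
    then have "b \<le> a * b" using assms by simp
    then show ?thesis using assms slope_quasi_decreasing by blast
  next
    case 2
    then have "a \<le> a * b" using assms by simp
    then show ?thesis using assms slope_quasi_decreasing by blast
  next
    case 3
    have "slope (a * b) \<le> slope_upper"
      using 3 by (intro slope_le_upper) auto
    also have "\<dots> \<le> ratio * slope a"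
      using 3 assms by (intro slope_upper_le) auto
    finally show ?thesis ..
  qed
  moreover have "ratio * slope a \<le> ratio * (slope a + slope b)"
    "ratio * slope b \<le> ratio * (slope a + slope b)"
    using ratio_ge_1 slope_nonneg[of a] slope_nonneg[of b] by (intro mult_left_mono; simp)+
  ultimately show ?thesis by linarith
qed

lemma slope_mult_le_small:
  assumes "0 < a" "a < 1" "0 < b" "b < 1" "a * b \<le> v0"
  shows "slope (a * b) \<le> 2 powr p * (ratio * (slope a + slope b))"
proof -
  have "slope (a * b) = c * (ln (1 / a) + ln (1 / b)) powr p"
    using assms by (simp add: slope_def ln_div ln_mult)
  also have "\<dots> \<le> c * (2 powr p * (ln (1 / a) powr p + ln (1 / b) powr p))"
    using assms c_pos p by (intro mult_left_mono powr_add_le_two_powr) (auto simp: ln_div)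
  also have "\<dots> = 2 powr p * (c * ln (1 / a) powr p + c * ln (1 / b) powr p)"
    by (simp add: algebra_simps)
  also have "\<dots> \<le> 2 powr p * (ratio * (slope a + slope b))"
    using log_power_le_slope[of a] log_power_le_slope[of b] assms
    by (intro mult_left_mono) (auto simp: distrib_left)
  finally show ?thesis .
qed

lemma slope_mult_le:
  assumes "a > 0" "b > 0"
  shows "slope (a * b) \<le> (2 powr p * ratio) * (slope a + slope b)"
proof (cases "a < 1 \<and> b < 1 \<and> a * b \<le> v0")
  case True
  then show ?thesis
    using slope_mult_le_small assms by (simp add: mult.assoc)
next
  case False
  then have "slope (a * b) \<le> ratio * (slope a + slope b)"
    using assms by (intro slope_mult_le_large) auto
  also have "\<dots> \<le> 2 powr p * (ratio * (slope a + slope b))"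
  proof -
    have "0 \<le> ratio * (slope a + slope b)"
      using ratio_ge_1 slope_nonneg by (intro mult_nonneg_nonneg add_nonneg_nonneg) auto
    moreover have "1 \<le> 2 powr p"
      using p by (simp add: ge_one_powr_ge_zero)
    ultimately show ?thesis
      by (metis mult_right_mono mult_1)
  qed
  finally show ?thesis
    by (simp add: mult.assoc)
qed

end

theorem proposition3p3:
  fixes \<alpha> c c' v0 :: real and n :: nat
  assumes "\<alpha> > 0" and "n \<ge> 1"
    and "c > 0" and "c' > 0" and "0 < v0" and "v0 < 1"
    and "lower_isoperimetric (nu_meas \<alpha> n) (J_fun \<alpha> n c c' v0)"
    and "concave_on {0<..} (J_fun \<alpha> n c c' v0)"
    and "mono_on {0<..} (J_fun \<alpha> n c c' v0)"
    and "continuous_on {0<..} (J_fun \<alpha> n c c' v0)"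
  shows "\<exists>C>0. \<forall>a b::real. a \<ge> 0 \<longrightarrow> b \<ge> 0 \<longrightarrow>
           C * J_fun \<alpha> n c c' v0 (a * b) \<le> b * J_fun \<alpha> n c c' v0 a + a * J_fun \<alpha> n c c' v0 b"
proof -
  interpret log_power_slope c c' v0 "1 + 1 / \<alpha>" "1 / real n"
    using assms by unfold_locales auto
  define K where "K = 2 powr (1 + 1 / \<alpha>) * ratio"
  have "K > 0"
    unfolding K_def using ratio_ge_1 by (intro mult_pos_pos) auto
  have "J_fun \<alpha> n c c' v0 v = v * slope v" if "v > 0" for v
  proof -
    have exponent: "(real n - 1) / real n = 1 + - (1 / real n)"
      using assms(2) by (simp add: field_simps)
    have "v powr ((real n - 1) / real n) = v * v powr (- (1 / real n))"
      using that unfolding exponent powr_add by simp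
    then show ?thesis
      using that by (simp add: J_fun_def slope_def)
  qed
  then have "\<forall>a b. a \<ge> 0 \<longrightarrow> b \<ge> 0 \<longrightarrow>
      1 / K * J_fun \<alpha> n c c' v0 (a * b) \<le> b * J_fun \<alpha> n c c' v0 a + a * J_fun \<alpha> n c c' v0 b"
    using \<open>K > 0\<close> slope_mult_le unfolding K_def
    by (intro mult_ineq_of_slope_ineq) (auto simp: J_fun_def)
  then show ?thesis
    using \<open>K > 0\<close> by (intro exI[of _ "1 / K"]) simp
qed

end
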